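(* Let $(X,\beta,m)$ be a non-atomic standard probability space and $\tau$ an ergodic invertible measure-preserving map of $X$. Let $E\in\beta$ with $m(E)>0$ and $m\big(\bigcup_{k=1}^n\tau^{-k}(E)\big)<1$ for all $n\ge1$. Put $F=X\setminus E$ and $f=1_F-m(F)$. Then $\|\sum_{k=1}^n f\circ\tau^k\|_\infty\ge n\,m(E)$ for every $n\ge1$, and consequently $f$ is not a $\tau$-coboundary with transfer function in $L_\infty(X)$, i.e. there is no $G\in L_\infty(X)$ with $f=G-G\circ\tau$ a.e.
   Context: $1_F$ denotes the indicator function of $F$. *)

theory Defs
  imports "HOL-Analysis.Analysis" "HOL-Probability.Probability"
begin

definition standard_prob_space :: "'a::polish_space measure \<Rightarrow> bool" where
  "standard_prob_space M \<longleftrightarrow> prob_space M \<and> sets M = sets (borel :: 'a measure)"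

definition nonatomic :: "'a measure \<Rightarrow> bool" where
  "nonatomic M \<longleftrightarrow> (\<forall>A\<in>sets M. 0 < measure M A \<longrightarrow>
      (\<exists>B\<in>sets M. B \<subseteq> A \<and> 0 < measure M B \<and> measure M B < measure M A))"

definition meas_preserving :: "'a measure \<Rightarrow> ('a \<Rightarrow> 'a) \<Rightarrow> bool" where
  "meas_preserving M T \<longleftrightarrow> T \<in> measurable M M \<and>
      (\<forall>A\<in>sets M. emeasure M (T -` A \<inter> space M) = emeasure M A)"

definition invertible_mpt :: "'a measure \<Rightarrow> ('a \<Rightarrow> 'a) \<Rightarrow> bool" where
  "invertible_mpt M T \<longleftrightarrow> meas_preserving M T \<and> bij_betw T (space M) (space M) \<and>
      meas_preserving M (inv_into (space M) T)"

definition ergodic :: "'a measure \<Rightarrow> ('a \<Rightarrow> 'a) \<Rightarrow> bool" where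
  "ergodic M T \<longleftrightarrow> (\<forall>A\<in>sets M. T -` A \<inter> space M = A \<longrightarrow>
      measure M A = 0 \<or> measure M A = 1)"

definition Linf :: "'a measure \<Rightarrow> ('a \<Rightarrow> real) \<Rightarrow> bool" where
  "Linf M G \<longleftrightarrow> G \<in> borel_measurable M \<and> (\<exists>C. AE x in M. \<bar>G x\<bar> \<le> C)"

definition Linf_norm :: "'a measure \<Rightarrow> ('a \<Rightarrow> real) \<Rightarrow> ereal" where
  "Linf_norm M g = esssup M (\<lambda>x. ereal \<bar>g x\<bar>)"

end

theory Submission
  imports Defs
begin

text \<open>On the set of points whose orbit avoids \<open>E\<close> at times \<open>1..n\<close>, which has positive
measure, every term of the Birkhoff sum of \<open>f\<close> equals \<open>1 - m(F) = m(E)\<close>, so the sum is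
\<open>n m(E)\<close> there. A coboundary \<open>G - G \<circ> \<tau>\<close> with bounded \<open>G\<close> has telescoping Birkhoff sums,
bounded by \<open>2 \<parallel>G\<parallel>\<^sub>\<infinity>\<close>, which is incompatible with this linear growth.\<close>

lemma meas_preserving_comp:
  assumes "meas_preserving M S" "meas_preserving M T"
  shows "meas_preserving M (S \<circ> T)"
  unfolding meas_preserving_def
proof (intro conjI ballI)
  have S: "S \<in> measurable M M" and T: "T \<in> measurable M M"
    and S_pres: "\<And>A. A \<in> sets M \<Longrightarrow> emeasure M (S -` A \<inter> space M) = emeasure M A"
    and T_pres: "\<And>A. A \<in> sets M \<Longrightarrow> emeasure M (T -` A \<inter> space M) = emeasure M A"
    using assms unfolding meas_preserving_def by auto
  show "S \<circ> T \<in> measurable M M" using measurable_comp[OF T S] .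
  fix A assume A: "A \<in> sets M"
  have "(S \<circ> T) -` A \<inter> space M = T -` (S -` A \<inter> space M) \<inter> space M"
    using measurable_space[OF T] by auto
  also have "emeasure M \<dots> = emeasure M (S -` A \<inter> space M)"
    using T_pres[OF measurable_sets[OF S A]] .
  also have "\<dots> = emeasure M A" using S_pres[OF A] .
  finally show "emeasure M ((S \<circ> T) -` A \<inter> space M) = emeasure M A" .
qed

lemma meas_preserving_funpow:
  assumes "meas_preserving M T"
  shows "meas_preserving M (T ^^ k)"
proof (induction k)
  case 0
  have "A \<in> sets M \<Longrightarrow> A \<inter> space M = A" for A
    using sets.sets_into_space by blast
  then show ?case by (simp add: meas_preserving_def)
next
  case (Suc k)
  then show ?case
    unfolding funpow.simps(2) by (rule meas_preserving_comp[OF assms])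
qed

lemma distr_meas_preserving:
  assumes "meas_preserving M T"
  shows "distr M M T = M"
  using assms by (intro measure_eqI) (auto simp: meas_preserving_def emeasure_distr)

lemma AE_meas_preserving:
  assumes "meas_preserving M T" and "AE x in M. P x"
  shows "AE x in M. P (T x)"
proof (rule AE_distrD[of T M M])
  show "T \<in> measurable M M" using assms(1) unfolding meas_preserving_def by blast
  show "AE x in distr M M T. P x"
    unfolding distr_meas_preserving[OF assms(1)] by (rule assms(2))
qed

lemma AE_bex_of_emeasure_pos:
  assumes "AE x in M. P x" and "A \<in> sets M" and "emeasure M A \<noteq> 0"
  shows "\<exists>x\<in>A. P x"
proof (rule ccontr)
  assume "\<not> (\<exists>x\<in>A. P x)"
  with assms(1) have "AE x in M. x \<notin> A" by auto
  then have "emeasure M {x \<in> space M. x \<in> A} = 0" by (rule emeasure_eq_0_AE)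
  moreover have "{x \<in> space M. x \<in> A} = A" using sets.sets_into_space[OF assms(2)] by auto
  ultimately show False using assms(3) by simp
qed

lemma Linf_norm_ge_of_emeasure_pos:
  assumes "A \<in> sets M" and "emeasure M A \<noteq> 0" and "\<And>x. x \<in> A \<Longrightarrow> c \<le> \<bar>g x\<bar>"
  shows "ereal c \<le> Linf_norm M g"
proof -
  have "AE x in M. ereal \<bar>g x\<bar> \<le> Linf_norm M g"
    unfolding Linf_norm_def by (rule esssup_AE)
  then obtain x where "x \<in> A" and x: "ereal \<bar>g x\<bar> \<le> Linf_norm M g"
    using AE_bex_of_emeasure_pos assms(1,2) by blast
  have "ereal c \<le> ereal \<bar>g x\<bar>" using assms(3)[OF \<open>x \<in> A\<close>] by simp
  then show ?thesis using x by (rule order_trans)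
qed

lemma Linf_norm_le_of_AE:
  assumes "g \<in> borel_measurable M" and "AE x in M. \<bar>g x\<bar> \<le> C"
  shows "Linf_norm M g \<le> ereal C"
  unfolding Linf_norm_def
proof (rule esssup_I)
  show "(\<lambda>x. ereal \<bar>g x\<bar>) \<in> borel_measurable M" using assms(1) by simp
  show "AE x in M. ereal \<bar>g x\<bar> \<le> ereal C" using assms(2) by simp
qed

lemma sum_coboundary_telescope:
  fixes G :: "'a \<Rightarrow> 'b::ab_group_add"
  shows "(\<Sum>k=1..n. G ((T ^^ k) x) - G (T ((T ^^ k) x))) = G (T x) - G ((T ^^ Suc n) x)"
  by (induction n) simp_all

lemma Linf_norm_birkhoff_sum_coboundary_le:
  assumes T: "meas_preserving M T" and f: "f \<in> borel_measurable M"
    and cob: "AE x in M. f x = G x - G (T x)" and bound: "AE x in M. \<bar>G x\<bar> \<le> C"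
  shows "Linf_norm M (\<lambda>x. \<Sum>k=1..n. f ((T ^^ k) x)) \<le> ereal (2 * C)"
proof (rule Linf_norm_le_of_AE)
  have T_pow: "(T ^^ k) \<in> measurable M M" for k
    using meas_preserving_funpow[OF T] unfolding meas_preserving_def by blast
  show "(\<lambda>x. \<Sum>k=1..n. f ((T ^^ k) x)) \<in> borel_measurable M"
    by (intro borel_measurable_sum measurable_compose[OF T_pow f])
  have "AE x in M. \<forall>k\<in>{1..n}. f ((T ^^ k) x) = G ((T ^^ k) x) - G (T ((T ^^ k) x))"
    using AE_meas_preserving[OF meas_preserving_funpow[OF T] cob] by (intro AE_finite_allI) auto
  moreover have "AE x in M. \<bar>G (T x)\<bar> \<le> C"
    using AE_meas_preserving[OF T bound] .
  moreover have "AE x in M. \<bar>G ((T ^^ Suc n) x)\<bar> \<le> C"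
    using AE_meas_preserving[OF meas_preserving_funpow[OF T] bound] .
  ultimately show "AE x in M. \<bar>\<Sum>k=1..n. f ((T ^^ k) x)\<bar> \<le> 2 * C"
  proof eventually_elim
    case (elim x)
    have "(\<Sum>k=1..n. f ((T ^^ k) x)) = (\<Sum>k=1..n. G ((T ^^ k) x) - G (T ((T ^^ k) x)))"
      using elim(1) by (intro sum.cong) simp_all
    also have "\<dots> = G (T x) - G ((T ^^ Suc n) x)"
      by (rule sum_coboundary_telescope)
    finally show ?case using elim(2,3) by linarith
  qed
qed

lemma Linf_norm_birkhoff_sum_ge:
  assumes "prob_space M" and T: "meas_preserving M T" and E: "E \<in> sets M"
    and avoid: "measure M (\<Union>k\<in>{1..n}. (T ^^ k) -` E \<inter> space M) < 1"
  shows "ereal (real n * measure M E) \<le>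
    Linf_norm M (\<lambda>x. \<Sum>k=1..n. indicator (space M - E) ((T ^^ k) x) - measure M (space M - E))"
proof -
  interpret prob_space M by fact
  have T_pow: "(T ^^ k) \<in> measurable M M" for k
    using meas_preserving_funpow[OF T] unfolding meas_preserving_def by blast
  define U where "U = (\<Union>k\<in>{1..n}. (T ^^ k) -` E \<inter> space M)"
  have U: "U \<in> sets M"
    unfolding U_def using measurable_sets[OF T_pow E] by (intro sets.finite_UN) auto
  show ?thesis
  proof (rule Linf_norm_ge_of_emeasure_pos)
    show "space M - U \<in> sets M" using U by blast
    have "measure M (space M - U) > 0"
      using prob_compl[OF U] avoid unfolding U_def by simp
    then show "emeasure M (space M - U) \<noteq> 0"
      by (simp add: emeasure_eq_measure)
    fix x assume x: "x \<in> space M - U"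
    \<comment> \<open>the orbit of x stays in the complement of E up to time n\<close>
    have "indicator (space M - E) ((T ^^ k) x) - measure M (space M - E) = measure M E"
      if "k \<in> {1..n}" for k
      using x that measurable_space[OF T_pow] prob_compl[OF E] unfolding U_def by auto
    then show "real n * measure M E \<le>
      \<bar>\<Sum>k=1..n. indicator (space M - E) ((T ^^ k) x) - measure M (space M - E)\<bar>"
      by simp
  qed
qed

theorem mainTheorem6:
  fixes M :: "'a::polish_space measure" and \<tau> :: "'a \<Rightarrow> 'a" and E :: "'a set"
  assumes "standard_prob_space M" and "nonatomic M"
    and "invertible_mpt M \<tau>" and "ergodic M \<tau>"
    and "E \<in> sets M" and "measure M E > 0"
    and "\<And>n. n \<ge> 1 \<Longrightarrow> measure M (\<Union>k\<in>{1..n}. (\<tau> ^^ k) -` E \<inter> space M) < 1"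
  defines "F \<equiv> space M - E"
  defines "f \<equiv> (\<lambda>x. indicator F x - measure M F)"
  shows "(\<forall>n::nat. n \<ge> 1 \<longrightarrow>
            Linf_norm M (\<lambda>x. \<Sum>k=1..n. f ((\<tau> ^^ k) x)) \<ge> ereal (real n * measure M E))
         \<and> \<not> (\<exists>G. Linf M G \<and> (AE x in M. f x = G x - G (\<tau> x)))"
proof -
  have prob: "prob_space M" using assms(1) unfolding standard_prob_space_def by blast
  have mp: "meas_preserving M \<tau>" using assms(3) unfolding invertible_mpt_def by blast
  have lower: "ereal (real n * measure M E) \<le> Linf_norm M (\<lambda>x. \<Sum>k=1..n. f ((\<tau> ^^ k) x))"
    if "n \<ge> 1" for n
    using Linf_norm_birkhoff_sum_ge[OF prob mp assms(5) assms(7)[OF that]]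
    unfolding f_def F_def .
  moreover have "\<not> (Linf M G \<and> (AE x in M. f x = G x - G (\<tau> x)))" for G
  proof
    assume "Linf M G \<and> (AE x in M. f x = G x - G (\<tau> x))"
    then obtain C where cob: "AE x in M. f x = G x - G (\<tau> x)" and bound: "AE x in M. \<bar>G x\<bar> \<le> C"
      unfolding Linf_def by blast
    have "f \<in> borel_measurable M" unfolding f_def F_def using assms(5) by measurable
    then have upper: "Linf_norm M (\<lambda>x. \<Sum>k=1..n. f ((\<tau> ^^ k) x)) \<le> ereal (2 * C)" for n
      using Linf_norm_birkhoff_sum_coboundary_le[OF mp _ cob bound] by blast
    obtain n where n: "max (2 * C) 0 < real n * measure M E"
      using ex_less_of_nat_mult[OF assms(6)] by blast
    then have "n \<ge> 1" by (cases n) auto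
    then have "ereal (real n * measure M E) \<le> ereal (2 * C)"
      using lower upper order_trans by blast
    with n show False by simp
  qed
  ultimately show ?thesis by blast
qed

end
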